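(* Let $\mathcal{A}=\{1,\dots,N\}$, $\boldsymbol{\lambda}\in\mathbb{R}_+^N$, $\boldsymbol{\delta}\in\mathbb{R}^N$ with $\delta_i>0$, $B\in\mathbb{R}_+^{N\times N}$ with zero diagonal whose associated directed graph is weakly connected but not strongly connected, $\mathcal{S}\subset\mathbb{R}_+^N$ convex, and $q_i:\mathbb{R}_+\to(0,1]$ decreasing, strictly convex, continuously differentiable. For $\epsilon>0$ and $\mathbf{s}\in\mathcal{S}$ let $\bar{\mathbf{p}}^\epsilon(\mathbf{s})>\mathbf{0}$ be the unique strictly positive solution of $(\mathbf{1}-\mathbf{p})\circ(\boldsymbol{\lambda}+\epsilon\mathbf{1}+B\mathbf{p})-\mathbf{q}(\mathbf{s})^{-1}\circ\boldsymbol{\delta}\circ\mathbf{p}=\mathbf{0}$. Then for each $\mathbf{s}\in\mathcal{S}$, $\bar{\mathbf{p}}^\epsilon(\mathbf{s})$ is increasing in $\epsilon>0$.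
   Context: $\circ$ is the element-wise product; $\mathbf{q}(\mathbf{s})=(q_i(s_i))_i$ and $\mathbf{q}(\mathbf{s})^{-1}$ is its element-wise inverse. The associated graph has an edge $(j,i)$ iff $b_{i,j}>0$. Vectors are ordered componentwise. *)

theory Defs
  imports "HOL-Analysis.Analysis"
begin

definition graph_edges :: "real^'n^'n \<Rightarrow> ('n \<times> 'n) set" where
  "graph_edges B = {(j, i). B $ i $ j > 0}"

definition strongly_connected_graph :: "real^'n^'n \<Rightarrow> bool" where
  "strongly_connected_graph B \<longleftrightarrow> (\<forall>i j. (i, j) \<in> (graph_edges B)\<^sup>*)"

definition weakly_connected_graph :: "real^'n^'n \<Rightarrow> bool" where
  "weakly_connected_graph B \<longleftrightarrow>
     (\<forall>i j. (i, j) \<in> (graph_edges B \<union> (graph_edges B)\<inverse>)\<^sup>*)"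

definition strictly_convex_on :: "real set \<Rightarrow> (real \<Rightarrow> real) \<Rightarrow> bool" where
  "strictly_convex_on A f \<longleftrightarrow>
     (\<forall>x\<in>A. \<forall>y\<in>A. \<forall>t::real. x \<noteq> y \<and> 0 < t \<and> t < 1 \<longrightarrow>
        f ((1 - t) * x + t * y) < (1 - t) * f x + t * f y)"

definition is_equilibrium ::
  "real^'n \<Rightarrow> real^'n \<Rightarrow> real^'n^'n \<Rightarrow> ('n \<Rightarrow> real \<Rightarrow> real) \<Rightarrow> real^'n \<Rightarrow> real \<Rightarrow> real^'n \<Rightarrow> bool"
  where
  "is_equilibrium lam del B q s eps p \<longleftrightarrow>
     (\<forall>i. (1 - p $ i) * (lam $ i + eps + (B *v p) $ i) - del $ i * p $ i / q i (s $ i) = 0)"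

definition pbar ::
  "real^'n \<Rightarrow> real^'n \<Rightarrow> real^'n^'n \<Rightarrow> ('n \<Rightarrow> real \<Rightarrow> real) \<Rightarrow> real^'n \<Rightarrow> real \<Rightarrow> real^'n"
  where
  "pbar lam del B q s eps =
     (THE p. (\<forall>i. p $ i > 0) \<and> is_equilibrium lam del B q s eps p)"

end

theory Submission
  imports Defs
begin

text \<open>Let \<open>p1\<close>, \<open>p2\<close> be the equilibria for \<open>eps1 \<le> eps2\<close> and let \<open>t\<close> be the least ratio
  \<open>p2 $ k / p1 $ k\<close>. If \<open>t < 1\<close>, the input \<open>y = lam + eps + B p\<close> at node \<open>k\<close> is strictly larger
  for \<open>p2\<close> than \<open>t\<close> times that for \<open>p1\<close>, because \<open>B\<close> is nonnegative and the constant part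
  grows. But the equation at \<open>k\<close> reads \<open>p $ k = y / (y + c)\<close> with \<open>c = del $ k / q k (s $ k)\<close>,
  a strictly increasing and subhomogeneous function of \<open>y\<close>, which forces \<open>p2 $ k > t * p1 $ k\<close>.\<close>

lemma matrix_vector_mult_mono:
  fixes B :: "'a::linordered_idom^'n^'m"
  assumes "\<forall>i j. 0 \<le> B $ i $ j" and "\<forall>j. x $ j \<le> y $ j"
  shows "(B *v x) $ i \<le> (B *v y) $ i"
  unfolding matrix_vector_mult_def
  using assms by (auto intro!: sum_mono mult_left_mono)

lemma min_ratio_scaling:
  fixes x y :: "real^'n"
  assumes "\<forall>j. 0 < x $ j"
  obtains k where "\<forall>j. y $ k / x $ k * x $ j \<le> y $ j"
proof -
  obtain k where k: "\<forall>j. y $ k / x $ k \<le> y $ j / x $ j"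
    using ex_min_if_finite[of "range (\<lambda>j. y $ j / x $ j)"] by (auto simp: not_less)
  have "y $ k / x $ k * x $ j \<le> y $ j" for j
    using k assms by (simp add: pos_le_divide_eq)
  then show thesis using that by blast
qed

lemma frac_add_strict_mono:
  fixes c y z :: real
  assumes "0 < c" "0 \<le> y" "y < z"
  shows "y / (y + c) < z / (z + c)"
  using assms by (simp add: field_simps)

lemma frac_add_subhomogeneous:
  fixes c t y :: real
  assumes "0 < c" "0 \<le> t" "t \<le> 1" "0 \<le> y"
  shows "t * (y / (y + c)) \<le> t * y / (t * y + c)"
proof -
  have "t * y \<le> y"
    using assms by (simp add: mult_left_le_one_le)
  then have "t * y / (y + c) \<le> t * y / (t * y + c)"
    using assms by (intro frac_le) (auto intro: add_nonneg_pos)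
  then show ?thesis
    by simp
qed

lemma is_equilibrium_component:
  assumes "is_equilibrium lam del B q s eps p"
    and "0 < del $ i / q i (s $ i)" and "0 \<le> lam $ i + eps + (B *v p) $ i"
  shows "p $ i = (lam $ i + eps + (B *v p) $ i)
                 / (lam $ i + eps + (B *v p) $ i + del $ i / q i (s $ i))"
proof -
  define y c where "y = lam $ i + eps + (B *v p) $ i" and "c = del $ i / q i (s $ i)"
  have "(1 - p $ i) * y = c * p $ i"
    using assms(1) unfolding is_equilibrium_def y_def c_def
    by (metis eq_iff_diff_eq_0 times_divide_eq_left mult.commute)
  then have "y = p $ i * (y + c)"
    by (simp add: algebra_simps)
  moreover have "0 < y + c"
    using assms(2,3) by (simp add: y_def c_def)
  ultimately show ?thesis
    unfolding y_def[symmetric] c_def[symmetric] by (simp add: eq_divide_eq)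
qed

lemma is_equilibrium_mono_eps:
  fixes lam del p1 p2 :: "real^'n" and B :: "real^'n^'n"
  assumes lam_nonneg: "\<forall>i. 0 \<le> lam $ i"
    and weights_pos: "\<forall>i. 0 < del $ i / q i (s $ i)"
    and B_nonneg: "\<forall>i j. 0 \<le> B $ i $ j"
    and eps: "0 < eps1" "eps1 \<le> eps2"
    and p1: "\<forall>i. 0 < p1 $ i" "is_equilibrium lam del B q s eps1 p1"
    and p2: "\<forall>i. 0 < p2 $ i" "is_equilibrium lam del B q s eps2 p2"
  shows "p1 $ i \<le> p2 $ i"
proof (rule ccontr)
  assume "\<not> p1 $ i \<le> p2 $ i"
  obtain k where k: "\<forall>j. p2 $ k / p1 $ k * p1 $ j \<le> p2 $ j"
    using min_ratio_scaling p1(1) by blast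
  define t where "t = p2 $ k / p1 $ k"
  have "t * p1 $ i < 1 * p1 $ i"
    using k[rule_format, of i] \<open>\<not> p1 $ i \<le> p2 $ i\<close> unfolding t_def by linarith
  then have t: "0 < t" "t < 1"
    using p1(1) p2(1) mult_right_less_imp_less[of t "p1 $ i" 1] by (auto simp: t_def less_imp_le)
  have p2_k: "p2 $ k = t * p1 $ k"
    using p1(1)[rule_format, of k] by (simp add: t_def)
  define c where "c = del $ k / q k (s $ k)"
  define y1 where "y1 = lam $ k + eps1 + (B *v p1) $ k"
  define y2 where "y2 = lam $ k + eps2 + (B *v p2) $ k"
  have "(B *v (t *\<^sub>R p1)) $ k \<le> (B *v p2) $ k"
    using k by (intro matrix_vector_mult_mono[OF B_nonneg]) (simp add: t_def)
  then have B_scaled: "t * (B *v p1) $ k \<le> (B *v p2) $ k"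
    by (simp add: matrix_vector_mult_scaleR)
  have "0 \<le> (B *v p1) $ k"
    using matrix_vector_mult_mono[of B 0 p1] B_nonneg p1(1) by (simp add: less_imp_le)
  then have y1_pos: "0 < y1"
    using lam_nonneg eps by (simp add: y1_def add_nonneg_pos add_pos_nonneg)
  have "0 < lam $ k + eps1"
    using lam_nonneg eps by (simp add: add_nonneg_pos)
  then have "t * (lam $ k + eps1) < lam $ k + eps1"
    using t by (simp add: mult_less_cancel_right2)
  then have "t * (lam $ k + eps1) < lam $ k + eps2"
    using eps by linarith
  then have y2_gt: "t * y1 < y2"
    using B_scaled by (simp add: y1_def y2_def distrib_left)
  have c: "0 < c"
    using weights_pos by (simp add: c_def)
  have "0 < y2"
    using y2_gt t y1_pos by (meson less_trans mult_pos_pos)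
  have "t * p1 $ k = t * (y1 / (y1 + c))"
    using is_equilibrium_component[OF p1(2), of k] weights_pos y1_pos
    by (simp add: c_def y1_def)
  also have "\<dots> \<le> t * y1 / (t * y1 + c)"
    using frac_add_subhomogeneous c t y1_pos by simp
  also have "\<dots> < y2 / (y2 + c)"
    using frac_add_strict_mono c t y1_pos y2_gt by simp
  also have "\<dots> = t * p1 $ k"
    using is_equilibrium_component[OF p2(2), of k] weights_pos \<open>0 < y2\<close> p2_k
    by (simp add: c_def y2_def)
  finally show False by simp
qed

theorem proposition4:
  fixes lam del :: "real^'n"
    and B :: "real^'n^'n"
    and S :: "(real^'n) set"
    and q :: "'n \<Rightarrow> real \<Rightarrow> real"
  assumes lam_nonneg: "\<forall>i. lam $ i \<ge> 0"
    and del_pos: "\<forall>i. del $ i > 0"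
    and B_nonneg: "\<forall>i j. B $ i $ j \<ge> 0"
    and B_diag: "\<forall>i. B $ i $ i = 0"
    and weak: "weakly_connected_graph B"
    and not_strong: "\<not> strongly_connected_graph B"
    and S_nonneg: "\<forall>s\<in>S. \<forall>i. s $ i \<ge> 0"
    and S_convex: "convex S"
    and q_range: "\<forall>i. \<forall>x\<ge>0. 0 < q i x \<and> q i x \<le> 1"
    and q_decr: "\<forall>i. \<forall>x y. 0 \<le> x \<and> x \<le> y \<longrightarrow> q i y \<le> q i x"
    and q_strict_convex: "\<forall>i. strictly_convex_on {0..} (q i)"
    and q_C1: "\<forall>i. \<exists>q'. (\<forall>x\<ge>0. (q i has_real_derivative q' x) (at x within {0..}))
                          \<and> continuous_on {0..} q'"
    and unique_sol: "\<forall>eps>0. \<forall>s\<in>S. \<exists>!p. (\<forall>i. p $ i > 0) \<and> is_equilibrium lam del B q s eps p"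
    and s_in: "s \<in> S"
    and eps: "0 < eps1" "eps1 \<le> eps2"
  shows "\<forall>i. pbar lam del B q s eps1 $ i \<le> pbar lam del B q s eps2 $ i"
proof -
  have pbar: "(\<forall>i. pbar lam del B q s e $ i > 0) \<and> is_equilibrium lam del B q s e (pbar lam del B q s e)"
    if "e > 0" for e
    unfolding pbar_def using theI'[of "\<lambda>p. (\<forall>i. p $ i > 0) \<and> is_equilibrium lam del B q s e p"]
      unique_sol that s_in by blast
  have "\<forall>i. 0 < del $ i / q i (s $ i)"
    using del_pos q_range S_nonneg s_in by simp
  then show ?thesis
    using is_equilibrium_mono_eps[OF lam_nonneg _ B_nonneg eps] pbar eps by force
qed

end
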